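(* Let $n>k+\ell$, and let $\mathcal F\subset\binom{[n]}{k}$ (non-trivial) and $\mathcal G\subset\binom{[n]}{\ell}$ be cross-intersecting families forming a saturated pair, shifted ad extremis with respect to $\tau(\mathcal F)\ge2$, and not both initial. Then the 2-cover graph $\hat{\mathcal H}$ of $\mathcal F$ is partially shifted.
   Context: Non-trivial: nonempty and not a star (a star is a family all of whose members share a common element); $\tau(\mathcal F)\ge2$ means $\mathcal F$ is not a star. Cross-intersecting: $F\cap G\ne\emptyset$ for all $F\in\mathcal F,G\in\mathcal G$; saturated pair: adding any further $k$-set to $\mathcal F$ or $\ell$-set to $\mathcal G$ destroys cross-intersection. Shifting: for $i<j$, $S_{ij}(F)=(F\setminus\{j\})\cup\{i\}$ if $j\in F$, $i\notin F$, $(F\setminus\{j\})\cup\{i\}\notin\mathcal F$, else $S_{ij}(F)=F$; $S_{ij}(\mathcal F)=\{S_{ij}(F):F\in\mathcal F\}$. Shifted ad extremis with respect to $\tau(\mathcal F)\ge2$: for every $1\le i<j\le n$, either $S_{ij}(\mathcal F)=\mathcal F$ and $S_{ij}(\mathcal G)=\mathcal G$, or $S_{ij}(\mathcal F)$ is a star. Initial: with $(a_1,\dots,a_k)\prec(b_1,\dots,b_k)$ iff $a_i\le b_i$ for all $i$, a family is initial if $A\prec B\in\mathcal F$ implies $A\in\mathcal F$. The 2-cover graph $\hat{\mathcal H}$ has vertex set $[n]$ and edges $\{i,j\}$ such that every $F\in\mathcal F$ meets $\{i,j\}$. A graph on $[n]$ is partially shifted if for all distinct $i,j,x$ with $x<j$: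 $\{i,j\}$ an edge and $\{x,j\}$ a non-edge imply $\{i,x\}$ is an edge. *)

theory Defs
  imports Main
begin

definition ksets :: "nat \<Rightarrow> nat \<Rightarrow> nat set set" where
  "ksets n k = {A. A \<subseteq> {1..n} \<and> card A = k}"

definition is_star :: "nat set set \<Rightarrow> bool" where
  "is_star F \<longleftrightarrow> (\<exists>x. \<forall>A\<in>F. x \<in> A)"

(* non-trivial: nonempty and not a star (tau(F) >= 2) *)
definition nontrivial :: "nat set set \<Rightarrow> bool" where
  "nontrivial F \<longleftrightarrow> F \<noteq> {} \<and> \<not> is_star F"

definition cross_intersecting :: "nat set set \<Rightarrow> nat set set \<Rightarrow> bool" where
  "cross_intersecting F G \<longleftrightarrow> (\<forall>A\<in>F. \<forall>B\<in>G. A \<inter> B \<noteq> {})"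

definition saturated_pair :: "nat \<Rightarrow> nat \<Rightarrow> nat \<Rightarrow> nat set set \<Rightarrow> nat set set \<Rightarrow> bool" where
  "saturated_pair n k l F G \<longleftrightarrow>
     (\<forall>A \<in> ksets n k - F. \<not> cross_intersecting (insert A F) G) \<and>
     (\<forall>B \<in> ksets n l - G. \<not> cross_intersecting F (insert B G))"

definition shift_set :: "nat \<Rightarrow> nat \<Rightarrow> nat set set \<Rightarrow> nat set \<Rightarrow> nat set" where
  "shift_set i j F A =
     (if j \<in> A \<and> i \<notin> A \<and> insert i (A - {j}) \<notin> F then insert i (A - {j}) else A)"

definition shift_family :: "nat \<Rightarrow> nat \<Rightarrow> nat set set \<Rightarrow> nat set set" where
  "shift_family i j F = shift_set i j F ` F"

definition shifted_ad_extremis :: "nat \<Rightarrow> nat set set \<Rightarrow> nat set set \<Rightarrow> bool" where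
  "shifted_ad_extremis n F G \<longleftrightarrow>
     (\<forall>i j. 1 \<le> i \<and> i < j \<and> j \<le> n \<longrightarrow>
        (shift_family i j F = F \<and> shift_family i j G = G) \<or> is_star (shift_family i j F))"

definition shift_prec :: "nat set \<Rightarrow> nat set \<Rightarrow> bool" where
  "shift_prec A B \<longleftrightarrow> card A = card B \<and>
     (\<forall>i < card A. sorted_list_of_set A ! i \<le> sorted_list_of_set B ! i)"

definition initial :: "nat \<Rightarrow> nat set set \<Rightarrow> bool" where
  "initial n F \<longleftrightarrow> (\<forall>B\<in>F. \<forall>A. A \<subseteq> {1..n} \<and> shift_prec A B \<longrightarrow> A \<in> F)"

definition cover2_edge :: "nat \<Rightarrow> nat set set \<Rightarrow> nat \<Rightarrow> nat \<Rightarrow> bool" where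
  "cover2_edge n F i j \<longleftrightarrow> i \<in> {1..n} \<and> j \<in> {1..n} \<and> i \<noteq> j \<and>
     (\<forall>A\<in>F. A \<inter> {i, j} \<noteq> {})"

definition partially_shifted :: "nat \<Rightarrow> (nat \<Rightarrow> nat \<Rightarrow> bool) \<Rightarrow> bool" where
  "partially_shifted n E \<longleftrightarrow>
     (\<forall>i\<in>{1..n}. \<forall>j\<in>{1..n}. \<forall>x\<in>{1..n}. i \<noteq> j \<and> i \<noteq> x \<and> x \<noteq> j \<and> x < j \<and>
        E i j \<and> \<not> E x j \<longrightarrow> E i x)"

end

theory Submission
  imports Defs
begin

text \<open>Let \<open>{i, j}\<close> be an edge and \<open>{x, j}\<close> a non-edge with \<open>x < j\<close>, so some member of \<open>F\<close> avoids
  both \<open>x\<close> and \<open>j\<close>. That member is untouched by \<open>S\<^sub>x\<^sub>j\<close>, so \<open>S\<^sub>x\<^sub>j(F)\<close> cannot be a star with centre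
  \<open>x\<close>; any other centre would already be a centre of \<open>F\<close>. Hence \<open>F\<close> is \<open>S\<^sub>x\<^sub>j\<close>-stable, and stability
  moves the cover \<open>{i, j}\<close> to \<open>{i, x}\<close>: a member containing \<open>j\<close> but neither \<open>i\<close> nor \<open>x\<close> would have
  its shift in \<open>F\<close> missing \<open>{i, j}\<close>.\<close>

lemma shift_set_subset_insert: "shift_set i j F A \<subseteq> insert i A"
  unfolding shift_set_def by auto

lemma shift_set_id_if_notin: "j \<notin> A \<Longrightarrow> shift_set i j F A = A"
  unfolding shift_set_def by simp

lemma shift_family_stable_imp_shifted_mem:
  assumes "shift_family i j F = F" and "A \<in> F" "j \<in> A" "i \<notin> A"
  shows "insert i (A - {j}) \<in> F"
proof (rule ccontr)
  assume "insert i (A - {j}) \<notin> F"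
  then have "shift_set i j F A = insert i (A - {j})"
    using assms(3,4) unfolding shift_set_def by simp
  then show False
    using assms \<open>insert i (A - {j}) \<notin> F\<close> unfolding shift_family_def by (metis imageI)
qed

lemma not_star_shift_family:
  assumes "\<not> is_star F" and "B \<in> F" "i \<notin> B" "j \<notin> B"
  shows "\<not> is_star (shift_family i j F)"
proof
  assume "is_star (shift_family i j F)"
  then obtain c where c: "\<forall>A\<in>shift_family i j F. c \<in> A"
    unfolding is_star_def by blast
  have "B \<in> shift_family i j F"
    using assms(2,4) shift_set_id_if_notin unfolding shift_family_def by (metis imageI)
  then have "c \<noteq> i" using c assms(3) by blast
  have "\<forall>A\<in>F. c \<in> A"
  proof
    fix A assume "A \<in> F"
    then have "c \<in> shift_set i j F A" using c unfolding shift_family_def by blast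
    then show "c \<in> A" using \<open>c \<noteq> i\<close> shift_set_subset_insert by blast
  qed
  then show False using assms(1) unfolding is_star_def by blast
qed

lemma cover_pair_shift_stable:
  assumes "shift_family x j F = F" and "\<forall>A\<in>F. A \<inter> {i, j} \<noteq> {}"
    and "x \<noteq> i" "x \<noteq> j"
  shows "\<forall>A\<in>F. A \<inter> {i, x} \<noteq> {}"
proof (rule ccontr)
  assume "\<not> (\<forall>A\<in>F. A \<inter> {i, x} \<noteq> {})"
  then obtain A where A: "A \<in> F" "i \<notin> A" "x \<notin> A" by blast
  then have "j \<in> A" using assms(2) by blast
  then have "insert x (A - {j}) \<in> F"
    using shift_family_stable_imp_shifted_mem[OF assms(1) A(1)] A(3) by blast
  moreover have "insert x (A - {j}) \<inter> {i, j} = {}" using A assms(3,4) by blast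
  ultimately show False using assms(2) by blast
qed

theorem proposition1p3:
  fixes n k l :: nat and F G :: "nat set set"
  assumes "n > k + l"
    and "F \<subseteq> ksets n k" and "G \<subseteq> ksets n l"
    and "nontrivial F"
    and "cross_intersecting F G"
    and "saturated_pair n k l F G"
    and "shifted_ad_extremis n F G"
    and "\<not> (initial n F \<and> initial n G)"
  shows "partially_shifted n (cover2_edge n F)"
  unfolding partially_shifted_def
proof (intro ballI impI)
  fix i j x
  assume i: "i \<in> {1..n}" and j: "j \<in> {1..n}" and x: "x \<in> {1..n}"
    and h: "i \<noteq> j \<and> i \<noteq> x \<and> x \<noteq> j \<and> x < j \<and> cover2_edge n F i j \<and> \<not> cover2_edge n F x j"
  have cover_ij: "\<forall>A\<in>F. A \<inter> {i, j} \<noteq> {}" using h unfolding cover2_edge_def by blast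
  obtain B where B: "B \<in> F" "x \<notin> B" "j \<notin> B"
    using h x j unfolding cover2_edge_def by blast
  have "\<not> is_star (shift_family x j F)"
    using not_star_shift_family B assms(4) unfolding nontrivial_def by blast
  then have "shift_family x j F = F"
    using assms(7) x j h unfolding shifted_ad_extremis_def by auto
  then have "\<forall>A\<in>F. A \<inter> {i, x} \<noteq> {}"
    using cover_pair_shift_stable cover_ij h by metis
  then show "cover2_edge n F i x" using i x h unfolding cover2_edge_def by blast
qed

end
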